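(* Fix real numbers $L,\ell_1,\ell_2>0$. The mapping $(\phi_1,\phi_2)\mapsto\phi_1\otimes\phi_2$ induces a continuous bijection \[\bigsqcup_{\substack{\ell'_1>0,\ \ell'_2>0\\ \ell'_1+\ell'_2=L}}\mathcal{G}(\ell'_1,\ell_1)\times\mathcal{G}(\ell'_2,\ell_2)\longrightarrow\mathcal{G}(L,\ell_1+\ell_2)\] which is not a homeomorphism.
   Context: $\mathcal{G}$ is the category whose objects are the real numbers $\ell>0$, with $\mathcal{G}(\ell_1,\ell_2)$ the set of nondecreasing homeomorphisms $[0,\ell_1]\to[0,\ell_2]$ (necessarily sending $0\mapsto0$, $\ell_1\mapsto\ell_2$), equipped with the compact-open topology, and composition given by composition of maps. For $\phi_i:[0,\ell_i]\to[0,\ell'_i]$ ($i=1,2$), $\phi_1\otimes\phi_2:[0,\ell_1+\ell_2]\to[0,\ell'_1+\ell'_2]$ is defined by $(\phi_1\otimes\phi_2)(t)=\phi_1(t)$ for $0\le t\le\ell_1$ and $\phi_2(t-\ell_1)+\ell'_1$ for $\ell_1\le t\le\ell_1+\ell_2$; on objects $\ell\otimes\ell'=\ell+\ell'$. The disjoint union on the left carries the disjoint union topology over the index set (indexed by the pairs $(\ell'_1,\ell'_2)$). *)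

theory Defs
  imports "HOL-Analysis.Analysis" "HOL-Library.FuncSet"
begin

definition compact_open_topology :: "'a topology \<Rightarrow> 'b topology \<Rightarrow> ('a \<Rightarrow> 'b) topology" where
  "compact_open_topology X Y =
     subtopology
       (topology_generated_by {{f. f ` K \<subseteq> U} | K U. compactin X K \<and> openin Y U})
       (topspace X \<rightarrow>\<^sub>E topspace Y)"

text \<open>Morphisms G(l1,l2): nondecreasing homeomorphisms [0,l1] \<rightarrow> [0,l2], represented
  as extensional functions (undefined outside [0,l1]).\<close>
definition Gmor :: "real \<Rightarrow> real \<Rightarrow> (real \<Rightarrow> real) set" where
  "Gmor l1 l2 = {f \<in> {0..l1} \<rightarrow>\<^sub>E {0..l2}.
      mono_on {0..l1} f \<and>
      homeomorphic_map (top_of_set {0..l1}) (top_of_set {0..l2}) f}"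

definition Gtop :: "real \<Rightarrow> real \<Rightarrow> (real \<Rightarrow> real) topology" where
  "Gtop l1 l2 = subtopology
     (compact_open_topology (top_of_set {0..l1}) (top_of_set {0..l2})) (Gmor l1 l2)"

definition Gtensor :: "real \<Rightarrow> real \<Rightarrow> real \<Rightarrow> (real \<Rightarrow> real) \<Rightarrow> (real \<Rightarrow> real) \<Rightarrow> (real \<Rightarrow> real)" where
  "Gtensor l1 l1' l2 phi1 phi2 =
     restrict (\<lambda>t. if t \<le> l1 then phi1 t else phi2 (t - l1) + l1') {0..l1 + l2}"

end

theory Submission
  imports Defs
begin

text \<open>A morphism \<open>\<psi> \<in> G(L, l\<^sub>1 + l\<^sub>2)\<close> is strictly increasing, so it takes the value
  \<open>l\<^sub>1\<close> at exactly one point \<open>a\<close>; cutting \<open>[0,L]\<close> at \<open>a\<close> writes \<open>\<psi>\<close> uniquely as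
  \<open>\<phi>\<^sub>1 \<otimes> \<phi>\<^sub>2\<close> with \<open>\<phi>\<^sub>1 \<in> G(a, l\<^sub>1)\<close> and \<open>\<phi>\<^sub>2 \<in> G(L - a, l\<^sub>2)\<close>, which gives bijectivity.
  On each summand the map is continuous, because a compact-open condition
  \<open>(\<phi>\<^sub>1 \<otimes> \<phi>\<^sub>2)(K) \<subseteq> U\<close> splits into one condition on \<open>\<phi>\<^sub>1\<close> and one on \<open>\<phi>\<^sub>2\<close>.
  The inverse is not continuous: a single summand is open in the disjoint union, but its image
  \<open>{\<psi>. \<psi> a = l\<^sub>1}\<close> is not open, since every compact-open neighbourhood of the linear
  morphism contains uniformly close quadratic perturbations of it, which miss the value
  \<open>l\<^sub>1\<close> at \<open>a\<close>.\<close>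

lemma continuous_map_from_sum_topology:
  assumes "\<And>i. i \<in> I \<Longrightarrow> continuous_map (X i) Y (\<lambda>x. f (i, x))"
  shows "continuous_map (sum_topology X I) Y f"
  unfolding continuous_map_def
proof (intro conjI allI impI)
  show "f \<in> topspace (sum_topology X I) \<rightarrow> topspace Y"
    using continuous_map_funspace[OF assms] by force
  fix U assume "openin Y U"
  then have "openin (X i) {x \<in> topspace (X i). f (i, x) \<in> U}" if "i \<in> I" for i
    using assms[OF that] by (simp add: continuous_map_def)
  then show "openin (sum_topology X I) {x \<in> topspace (sum_topology X I). f x \<in> U}"
    by (simp add: openin_sum_topology subset_iff cong: conj_cong)
qed

lemma compact_image_uniform_nbhd:
  fixes psi :: "'a::topological_space \<Rightarrow> 'b::metric_space"
  assumes "compact K" "continuous_on K psi" "open W" "psi ` K \<subseteq> W"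
  obtains e where "e > 0" "\<And>f. \<forall>t\<in>K. dist (f t) (psi t) < e \<Longrightarrow> f ` K \<subseteq> W"
proof -
  obtain e where "e > 0" "(\<Union>x\<in>psi ` K. ball x e) \<subseteq> W"
    using compact_subset_open_imp_ball_epsilon_subset
      [OF compact_continuous_image[OF assms(2,1)] assms(3,4)] .
  then show ?thesis
    using that by (force simp: dist_commute)
qed

lemma GmorD:
  assumes f: "f \<in> Gmor L M" and L: "0 \<le> L"
  shows "f \<in> extensional {0..L}" "continuous_on {0..L} f" "strict_mono_on {0..L} f"
    "f 0 = 0" "f L = M"
proof -
  have fE: "f \<in> {0..L} \<rightarrow>\<^sub>E {0..M}" and mo: "mono_on {0..L} f"
    and h: "homeomorphic_map (top_of_set {0..L}) (top_of_set {0..M}) f"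
    using f by (auto simp: Gmor_def)
  show "f \<in> extensional {0..L}"
    using fE by (simp add: PiE_iff)
  show "continuous_on {0..L} f"
    using homeomorphic_imp_continuous_map[OF h] by (simp add: continuous_map_in_subtopology)
  show "strict_mono_on {0..L} f"
    using mono_imp_strict_mono[OF mo] homeomorphic_imp_injective_map[OF h] by simp
  have sur: "f ` {0..L} = {0..M}"
    using homeomorphic_imp_surjective_map[OF h] by simp
  have range: "f t \<in> {0..M}" if "t \<in> {0..L}" for t
    using fE that by (auto simp: PiE_iff)
  then have M: "0 \<le> M"
    using L by force
  obtain t0 where "t0 \<in> {0..L}" "f t0 = 0"
    using sur M by (metis atLeastAtMost_iff imageE order_refl)
  then show "f 0 = 0"
    using mono_onD[OF mo, of 0 t0] range[of 0] L by fastforce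
  obtain t1 where "t1 \<in> {0..L}" "f t1 = M"
    using sur M by (metis atLeastAtMost_iff imageE order_refl)
  then show "f L = M"
    using mono_onD[OF mo, of t1 L] range[of L] L by fastforce
qed

lemma GmorI:
  assumes L: "0 \<le> L" and ext: "f \<in> extensional {0..L}" and cont: "continuous_on {0..L} f"
    and sm: "strict_mono_on {0..L} f" and f0: "f 0 = 0" and fL: "f L = M"
  shows "f \<in> Gmor L M"
proof -
  have rng: "f ` {0..L} \<subseteq> {0..M}"
    using strict_mono_on_leD[OF sm] f0 fL L by fastforce
  have "{0..M} \<subseteq> f ` {0..L}"
  proof
    fix y assume "y \<in> {0..M}"
    then obtain x where "0 \<le> x" "x \<le> L" "f x = y"
      using IVT'[of f 0 y L] cont f0 fL L by auto
    then show "y \<in> f ` {0..L}" by force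
  qed
  with rng have sur: "f ` {0..L} = {0..M}" by blast
  have "homeomorphic_map (top_of_set {0..L}) (top_of_set {0..M}) f"
    using cont rng sur strict_mono_on_imp_inj_on[OF sm]
    by (intro continuous_imp_homeomorphic_map)
      (auto simp: compact_space_subtopology Hausdorff_space_subtopology)
  then show ?thesis
    using ext rng strict_mono_on_imp_mono_on[OF sm] by (auto simp: Gmor_def PiE_iff)
qed

lemma Gmor_range: "p \<in> Gmor a l \<Longrightarrow> t \<in> {0..a} \<Longrightarrow> p t \<in> {0..l}"
  unfolding Gmor_def by (simp add: PiE_iff)

lemma Gtensor_apply:
  "t \<in> {0..a+b} \<Longrightarrow> Gtensor a l1 b p q t = (if t \<le> a then p t else q (t - a) + l1)"
  by (simp add: Gtensor_def)

lemma continuous_on_Gtensor: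
  assumes p: "p \<in> Gmor a l1" and q: "q \<in> Gmor b l2" and "0 \<le> a" "0 \<le> b"
  shows "continuous_on {0..a+b} (Gtensor a l1 b p q)"
proof -
  have cp: "continuous_on {0..a} p" and pa: "p a = l1"
    and cq: "continuous_on {0..b} q" and q0: "q 0 = 0"
    using GmorD[OF p] GmorD[OF q] assms by auto
  have "continuous_on {a..a+b} (\<lambda>t. q (t - a) + l1)"
    by (intro continuous_intros continuous_on_compose2[OF cq]) auto
  then have "continuous_on {0..a+b} (\<lambda>t. if t \<le> a then p t else q (t - a) + l1)"
    using cp pa q0 assms
    by (intro continuous_on_cases_le[where h="\<lambda>t. t"] continuous_on_id)
      (auto elim!: continuous_on_subset)
  then show ?thesis
    by (rule continuous_on_eq) (simp add: Gtensor_apply)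
qed

lemma strict_mono_on_Gtensor:
  assumes p: "p \<in> Gmor a l1" and q: "q \<in> Gmor b l2" and "0 \<le> a" "0 \<le> b"
  shows "strict_mono_on {0..a+b} (Gtensor a l1 b p q)"
proof (rule strict_mono_onI)
  have sp: "strict_mono_on {0..a} p" and pa: "p a = l1"
    and sq: "strict_mono_on {0..b} q" and q0: "q 0 = 0"
    using GmorD[OF p] GmorD[OF q] assms by auto
  fix r s assume r: "r \<in> {0..a+b}" and s: "s \<in> {0..a+b}" and "r < s"
  consider "s \<le> a" | "r \<le> a" "a < s" | "a < r"
    using \<open>r < s\<close> by linarith
  then show "Gtensor a l1 b p q r < Gtensor a l1 b p q s"
  proof cases
    case 1
    then show ?thesis
      using r s \<open>r < s\<close> strict_mono_onD[OF sp, of r s] by (simp add: Gtensor_apply)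
  next
    case 2
    then have "p r \<le> p a" "q 0 < q (s - a)"
      using r s strict_mono_on_leD[OF sp, of r a] strict_mono_onD[OF sq, of 0 "s - a"] by auto
    then show ?thesis
      using 2 r s pa q0 by (simp add: Gtensor_apply)
  next
    case 3
    then show ?thesis
      using r s \<open>r < s\<close> strict_mono_onD[OF sq, of "r - a" "s - a"] by (simp add: Gtensor_apply)
  qed
qed

lemma Gtensor_in_Gmor:
  assumes p: "p \<in> Gmor a l1" and q: "q \<in> Gmor b l2" and "0 \<le> a" "0 \<le> b"
  shows "Gtensor a l1 b p q \<in> Gmor (a+b) (l1+l2)"
proof (rule GmorI)
  have "p 0 = 0" "p a = l1" "q 0 = 0" "q b = l2"
    using GmorD[OF p] GmorD[OF q] assms by auto
  then show "Gtensor a l1 b p q 0 = 0" "Gtensor a l1 b p q (a+b) = l1 + l2"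
    using assms by (auto simp: Gtensor_apply)
qed (use assms continuous_on_Gtensor strict_mono_on_Gtensor in \<open>auto simp: Gtensor_def\<close>)

definition Gsplit_left :: "real \<Rightarrow> (real \<Rightarrow> real) \<Rightarrow> real \<Rightarrow> real" where
  "Gsplit_left a psi = restrict psi {0..a}"

definition Gsplit_right :: "real \<Rightarrow> real \<Rightarrow> real \<Rightarrow> (real \<Rightarrow> real) \<Rightarrow> real \<Rightarrow> real" where
  "Gsplit_right a l1 b psi = restrict (\<lambda>s. psi (s + a) - l1) {0..b}"

lemma Gsplit_left_in_Gmor:
  assumes psi: "psi \<in> Gmor (a+b) M" and "0 \<le> a" "0 \<le> b" "psi a = l1"
  shows "Gsplit_left a psi \<in> Gmor a l1"
proof (rule GmorI)
  have sub: "{0..a} \<subseteq> {0..a+b}"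
    using assms by auto
  show "continuous_on {0..a} (Gsplit_left a psi)"
    using continuous_on_subset[OF GmorD(2)[OF psi] sub] assms
    by (auto simp: Gsplit_left_def elim!: continuous_on_eq)
  show "strict_mono_on {0..a} (Gsplit_left a psi)"
    using GmorD(3)[OF psi] sub assms by (auto simp: Gsplit_left_def strict_mono_on_def)
qed (use assms GmorD[OF psi] in \<open>auto simp: Gsplit_left_def\<close>)

lemma Gsplit_right_in_Gmor:
  assumes psi: "psi \<in> Gmor (a+b) (l1+l2)" and "0 \<le> a" "0 \<le> b" "psi a = l1"
  shows "Gsplit_right a l1 b psi \<in> Gmor b l2"
proof (rule GmorI)
  have "continuous_on {0..b} (\<lambda>s. psi (s + a) - l1)"
    using assms by (intro continuous_intros continuous_on_compose2[OF GmorD(2)[OF psi]]) auto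
  then show "continuous_on {0..b} (Gsplit_right a l1 b psi)"
    by (rule continuous_on_eq) (simp add: Gsplit_right_def)
  show "strict_mono_on {0..b} (Gsplit_right a l1 b psi)"
    using GmorD(3)[OF psi] assms by (auto simp: Gsplit_right_def strict_mono_on_def)
qed (use assms GmorD[OF psi] in \<open>auto simp: Gsplit_right_def add.commute\<close>)

lemma Gtensor_Gsplit:
  "psi \<in> extensional {0..a+b} \<Longrightarrow> Gtensor a l1 b (Gsplit_left a psi) (Gsplit_right a l1 b psi) = psi"
  by (rule ext) (auto simp: Gtensor_def Gsplit_left_def Gsplit_right_def extensional_def)

lemma Gsplit_left_Gtensor:
  assumes p: "p \<in> Gmor a l1" and "0 \<le> a" "0 \<le> b"
  shows "Gsplit_left a (Gtensor a l1 b p q) = p"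
  using GmorD(1)[OF p] assms by (auto simp: Gsplit_left_def Gtensor_def extensional_def)

lemma Gsplit_right_Gtensor:
  assumes p: "p \<in> Gmor a l1" and q: "q \<in> Gmor b l2" and "0 \<le> a" "0 \<le> b"
  shows "Gsplit_right a l1 b (Gtensor a l1 b p q) = q"
  using GmorD[OF p] GmorD[OF q] assms by (auto simp: Gsplit_right_def Gtensor_def extensional_def)

lemma image_Gtensor:
  assumes "0 \<le> a" "0 \<le> b"
  shows "(\<lambda>(p, q). Gtensor a l1 b p q) ` (Gmor a l1 \<times> Gmor b l2)
    = {psi \<in> Gmor (a+b) (l1+l2). psi a = l1}"
proof
  show "(\<lambda>(p, q). Gtensor a l1 b p q) ` (Gmor a l1 \<times> Gmor b l2)
    \<subseteq> {psi \<in> Gmor (a+b) (l1+l2). psi a = l1}"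
    using assms GmorD(5) by (auto simp: Gtensor_in_Gmor Gtensor_apply)
  show "{psi \<in> Gmor (a+b) (l1+l2). psi a = l1}
    \<subseteq> (\<lambda>(p, q). Gtensor a l1 b p q) ` (Gmor a l1 \<times> Gmor b l2)"
  proof (rule subsetI, elim CollectE conjE)
    fix psi assume psi: "psi \<in> Gmor (a+b) (l1+l2)" and "psi a = l1"
    then have "psi = Gtensor a l1 b (Gsplit_left a psi) (Gsplit_right a l1 b psi)"
      using GmorD(1) assms by (simp add: Gtensor_Gsplit)
    moreover have "(Gsplit_left a psi, Gsplit_right a l1 b psi) \<in> Gmor a l1 \<times> Gmor b l2"
      using Gsplit_left_in_Gmor Gsplit_right_in_Gmor psi \<open>psi a = l1\<close> assms by blast
    ultimately show "psi \<in> (\<lambda>(p, q). Gtensor a l1 b p q) ` (Gmor a l1 \<times> Gmor b l2)"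
      by (metis (no_types, lifting) case_prod_conv image_eqI)
  qed
qed

lemma Gtensor_inject:
  assumes p: "p \<in> Gmor a l1" and q: "q \<in> Gmor b l2" and p': "p' \<in> Gmor a' l1"
    and q': "q' \<in> Gmor b' l2" and nonneg: "0 \<le> a" "0 \<le> b" "0 \<le> a'" "0 \<le> b'"
    and sum: "a + b = a' + b'" and eq: "Gtensor a l1 b p q = Gtensor a' l1 b' p' q'"
  shows "a = a' \<and> p = p' \<and> q = q'"
proof -
  have inj: "inj_on (Gtensor a l1 b p q) {0..a+b}"
    using strict_mono_on_imp_inj_on[OF strict_mono_on_Gtensor[OF p q]] nonneg by simp
  have "Gtensor a l1 b p q a = l1"
    using GmorD(5)[OF p] nonneg by (simp add: Gtensor_apply)
  moreover have "Gtensor a l1 b p q a' = l1"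
    using GmorD(5)[OF p'] nonneg by (simp add: eq Gtensor_apply)
  ultimately have "a = a'"
    using inj_onD[OF inj] nonneg sum by simp
  have "p = Gsplit_left a (Gtensor a l1 b p q)"
    using Gsplit_left_Gtensor[OF p] nonneg by simp
  also have "\<dots> = p'"
    using Gsplit_left_Gtensor[OF p'] nonneg eq \<open>a = a'\<close> by simp
  finally have "p = p'" .
  have "q = Gsplit_right a l1 b (Gtensor a l1 b p q)"
    using Gsplit_right_Gtensor[OF p q] nonneg by simp
  also have "\<dots> = q'"
    using Gsplit_right_Gtensor[OF p' q'] nonneg sum eq \<open>a = a'\<close> by simp
  finally show ?thesis
    using \<open>a = a'\<close> \<open>p = p'\<close> by simp
qed

definition Gsubbasis :: "real \<Rightarrow> real \<Rightarrow> (real \<Rightarrow> real) set set" where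
  "Gsubbasis L M = {{f. f ` K \<subseteq> U} | K U.
     compactin (top_of_set {0..L}) K \<and> openin (top_of_set {0..M}) U}"

lemma Gtop_eq_subtopology:
  "Gtop L M = subtopology (topology_generated_by (Gsubbasis L M)) (Gmor L M)"
proof -
  have "({0..L} \<rightarrow>\<^sub>E {0..M}) \<inter> Gmor L M = Gmor L M"
    by (auto simp: Gmor_def)
  then show ?thesis
    unfolding Gtop_def compact_open_topology_def Gsubbasis_def subtopology_subtopology by simp
qed

lemma Union_Gsubbasis: "\<Union>(Gsubbasis L M) = UNIV"
proof -
  have "{f. f ` {} \<subseteq> {}} \<in> Gsubbasis L M"
    unfolding Gsubbasis_def by blast
  then show ?thesis
    by blast
qed

lemma topspace_Gtop [simp]: "topspace (Gtop L M) = Gmor L M"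
  by (simp add: Gtop_eq_subtopology Union_Gsubbasis)

lemma openin_Gtop_subbasic:
  assumes "compactin (top_of_set {0..L}) K" "openin (top_of_set {0..M}) U"
  shows "openin (Gtop L M) ({f. f ` K \<subseteq> U} \<inter> Gmor L M)"
proof -
  have "{f. f ` K \<subseteq> U} \<in> Gsubbasis L M"
    using assms unfolding Gsubbasis_def by blast
  then show ?thesis
    unfolding Gtop_eq_subtopology by (intro openin_subtopology_Int topology_generated_by_Basis)
qed

lemma Gtensor_image:
  assumes "K \<subseteq> {0..a+b}" "p a = l1" "q 0 = 0"
  shows "Gtensor a l1 b p q ` K
    = p ` (K \<inter> {0..a}) \<union> (\<lambda>s. q s + l1) ` ((\<lambda>t. t - a) ` (K \<inter> {a..a+b}))"
    (is "_ = ?R")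
proof (intro equalityI subsetI)
  fix y assume "y \<in> Gtensor a l1 b p q ` K"
  then obtain t where t: "t \<in> K" "y = Gtensor a l1 b p q t"
    by blast
  then have "t \<in> {0..a+b}"
    using assms by blast
  then show "y \<in> ?R"
    using t by (cases "t \<le> a") (auto simp: Gtensor_apply)
next
  fix y assume "y \<in> ?R"
  then consider t where "t \<in> K" "t \<in> {0..a}" "y = p t"
    | t where "t \<in> K" "t \<in> {a..a+b}" "y = q (t - a) + l1"
    by blast
  then show "y \<in> Gtensor a l1 b p q ` K"
  proof cases
    case 1
    then show ?thesis
      using assms by (force simp: Gtensor_apply)
  next
    case (2 t)
    then have "y = Gtensor a l1 b p q t"
      using assms by (cases "t = a") (auto simp: Gtensor_apply)
    then show ?thesis
      using 2 by blast
  qed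
qed

lemma Gtensor_image_subset_iff:
  assumes p: "p \<in> Gmor a l1" and q: "q \<in> Gmor b l2" and "0 \<le> a" "0 \<le> b"
    and K: "K \<subseteq> {0..a+b}"
  shows "Gtensor a l1 b p q ` K \<subseteq> {0..l1+l2} \<inter> W \<longleftrightarrow>
    p ` (K \<inter> {0..a}) \<subseteq> {0..l1} \<inter> W \<and>
    q ` ((\<lambda>t. t - a) ` (K \<inter> {a..a+b})) \<subseteq> {0..l2} \<inter> (\<lambda>y. y + l1) -` W"
proof -
  have "Gtensor a l1 b p q ` K \<subseteq> {0..l1+l2}"
    using Gmor_range[OF Gtensor_in_Gmor[OF p q]] K assms by blast
  then have "Gtensor a l1 b p q ` K \<subseteq> {0..l1+l2} \<inter> W \<longleftrightarrow> Gtensor a l1 b p q ` K \<subseteq> W"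
    by (simp add: Int_subset_iff)
  also have "\<dots> \<longleftrightarrow> p ` (K \<inter> {0..a}) \<subseteq> W \<and> (\<lambda>s. q s + l1) ` ((\<lambda>t. t - a) ` (K \<inter> {a..a+b})) \<subseteq> W"
    using GmorD(5)[OF p] GmorD(4)[OF q] assms by (simp add: Gtensor_image)
  also have "\<dots> \<longleftrightarrow> p ` (K \<inter> {0..a}) \<subseteq> {0..l1} \<inter> W \<and>
    q ` ((\<lambda>t. t - a) ` (K \<inter> {a..a+b})) \<subseteq> {0..l2} \<inter> (\<lambda>y. y + l1) -` W"
    using Gmor_range[OF p] Gmor_range[OF q] by (auto simp: Int_subset_iff image_subset_iff)
  finally show ?thesis .
qed

lemma continuous_map_Gtensor:
  assumes "0 \<le> a" "0 \<le> b"
  shows "continuous_map (prod_topology (Gtop a l1) (Gtop b l2)) (Gtop (a+b) (l1+l2))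
    (\<lambda>(p, q). Gtensor a l1 b p q)"
proof -
  let ?P = "prod_topology (Gtop a l1) (Gtop b l2)"
  let ?g = "\<lambda>(p, q). Gtensor a l1 b p q"
  have "openin ?P (?g -` U \<inter> topspace ?P)" if "U \<in> Gsubbasis (a+b) (l1+l2)" for U
  proof -
    obtain K V where U: "U = {f. f ` K \<subseteq> V}" and K: "compactin (top_of_set {0..a+b}) K"
      and V: "openin (top_of_set {0..l1+l2}) V"
      using \<open>U \<in> Gsubbasis (a+b) (l1+l2)\<close> unfolding Gsubbasis_def by blast
    obtain W where "open W" and VW: "V = {0..l1+l2} \<inter> W"
      using V openin_open by metis
    define K1 where "K1 = K \<inter> {0..a}"
    define K2 where "K2 = (\<lambda>t. t - a) ` (K \<inter> {a..a+b})"
    define V1 where "V1 = {0..l1} \<inter> W"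
    define V2 where "V2 = {0..l2} \<inter> (\<lambda>y. y + l1) -` W"
    have "compact K" and Ksub: "K \<subseteq> {0..a+b}"
      using K by (auto simp: compactin_subtopology)
    then have "compact K2"
      unfolding K2_def by (intro compact_continuous_image continuous_intros) auto
    then have "compactin (top_of_set {0..a}) K1" "compactin (top_of_set {0..b}) K2"
      using \<open>compact K\<close> by (auto simp: compactin_subtopology K1_def K2_def)
    moreover have "openin (top_of_set {0..l1}) V1" "openin (top_of_set {0..l2}) V2"
      unfolding V1_def V2_def openin_open
      using \<open>open W\<close> continuous_open_vimage[of W "\<lambda>y. y + l1"] by (auto intro: continuous_intros)
    ultimately have "openin (Gtop a l1) ({p. p ` K1 \<subseteq> V1} \<inter> Gmor a l1)"
      "openin (Gtop b l2) ({q. q ` K2 \<subseteq> V2} \<inter> Gmor b l2)"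
      by (auto intro: openin_Gtop_subbasic)
    moreover have "(p, q) \<in> ?g -` U \<inter> topspace ?P
      \<longleftrightarrow> (p, q) \<in> ({p. p ` K1 \<subseteq> V1} \<inter> Gmor a l1) \<times> ({q. q ` K2 \<subseteq> V2} \<inter> Gmor b l2)"
      for p q
    proof (cases "p \<in> Gmor a l1 \<and> q \<in> Gmor b l2")
      case True
      then show ?thesis
        using Gtensor_image_subset_iff[of p a l1 q b l2 K W] assms Ksub
        by (simp add: U VW K1_def K2_def V1_def V2_def)
    qed auto
    then have "?g -` U \<inter> topspace ?P
      = ({p. p ` K1 \<subseteq> V1} \<inter> Gmor a l1) \<times> ({q. q ` K2 \<subseteq> V2} \<inter> Gmor b l2)"
      by (simp add: set_eq_iff)
    ultimately show ?thesis
      by (simp add: openin_prod_Times_iff)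
  qed
  then have "continuous_map ?P (topology_generated_by (Gsubbasis (a+b) (l1+l2))) ?g"
    by (simp add: continuous_on_generated_topo_iff Union_Gsubbasis)
  moreover have "?g \<in> topspace ?P \<rightarrow> Gmor (a+b) (l1+l2)"
    using Gtensor_in_Gmor assms by auto
  ultimately show ?thesis
    by (simp add: Gtop_eq_subtopology[of "a+b"] continuous_map_in_subtopology image_subset_iff_funcset)
qed

lemma generate_topology_on_Gsubbasis_uniform_nbhd:
  assumes "generate_topology_on (Gsubbasis L M) T" "psi \<in> T"
    and cont: "continuous_on {0..L} psi"
  shows "\<exists>e>0. \<forall>f. (\<forall>t\<in>{0..L}. f t \<in> {0..M} \<and> \<bar>f t - psi t\<bar> < e) \<longrightarrow> f \<in> T"
  using assms(1,2)
proof (induction rule: generate_topology_on.induct)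
  case Empty
  then show ?case
    by simp
next
  case (Int A B)
  then obtain e1 e2
    where "e1 > 0" and e1: "\<forall>f. (\<forall>t\<in>{0..L}. f t \<in> {0..M} \<and> \<bar>f t - psi t\<bar> < e1) \<longrightarrow> f \<in> A"
      and "e2 > 0" and e2: "\<forall>f. (\<forall>t\<in>{0..L}. f t \<in> {0..M} \<and> \<bar>f t - psi t\<bar> < e2) \<longrightarrow> f \<in> B"
    by blast
  show ?case
  proof (intro exI[of _ "min e1 e2"] conjI allI impI)
    fix f assume "\<forall>t\<in>{0..L}. f t \<in> {0..M} \<and> \<bar>f t - psi t\<bar> < min e1 e2"
    then show "f \<in> A \<inter> B"
      using e1 e2 by simp
  qed (use \<open>e1 > 0\<close> \<open>e2 > 0\<close> in simp)
next
  case (UN \<K>)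
  then obtain k where "k \<in> \<K>" "psi \<in> k"
    by blast
  then obtain e where "e > 0" "\<forall>f. (\<forall>t\<in>{0..L}. f t \<in> {0..M} \<and> \<bar>f t - psi t\<bar> < e) \<longrightarrow> f \<in> k"
    using UN.IH by blast
  then show ?case
    using \<open>k \<in> \<K>\<close> by blast
next
  case (Basis S)
  then obtain K U where S: "S = {f. f ` K \<subseteq> U}" and K: "compactin (top_of_set {0..L}) K"
    and U: "openin (top_of_set {0..M}) U"
    unfolding Gsubbasis_def by blast
  obtain W where "open W" and UW: "U = {0..M} \<inter> W"
    using U openin_open by metis
  have "compact K" and Ksub: "K \<subseteq> {0..L}"
    using K by (auto simp: compactin_subtopology)
  moreover have "psi ` K \<subseteq> W"
    using \<open>psi \<in> S\<close> S UW by blast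
  ultimately show ?case
  proof (rule compact_image_uniform_nbhd[OF _ continuous_on_subset[OF cont] \<open>open W\<close>])
    fix e assume "e > 0" and e: "\<And>f. \<forall>t\<in>K. dist (f t) (psi t) < e \<Longrightarrow> f ` K \<subseteq> W"
    show ?case
    proof (intro exI[of _ e] conjI allI impI)
      fix f assume f: "\<forall>t\<in>{0..L}. f t \<in> {0..M} \<and> \<bar>f t - psi t\<bar> < e"
      then have "f ` K \<subseteq> W"
        using Ksub by (intro e) (auto simp: dist_real_def)
      then show "f \<in> S"
        using f Ksub by (auto simp: S UW)
    qed (rule \<open>e > 0\<close>)
  qed
qed

lemma openin_Gtop_uniform_nbhd:
  assumes "openin (Gtop L M) T" "psi \<in> T" "0 \<le> L"
  obtains e where "e > 0" "\<And>f. f \<in> Gmor L M \<Longrightarrow> \<forall>t\<in>{0..L}. \<bar>f t - psi t\<bar> < e \<Longrightarrow> f \<in> T"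
proof -
  obtain T' where T': "openin (topology_generated_by (Gsubbasis L M)) T'"
    and T: "T = T' \<inter> Gmor L M"
    using assms(1) unfolding Gtop_eq_subtopology openin_subtopology by blast
  then have psi: "psi \<in> Gmor L M" "psi \<in> T'"
    using assms(2) by auto
  obtain e where "e > 0" "\<forall>f. (\<forall>t\<in>{0..L}. f t \<in> {0..M} \<and> \<bar>f t - psi t\<bar> < e) \<longrightarrow> f \<in> T'"
    using generate_topology_on_Gsubbasis_uniform_nbhd[OF openin_topology_generated_by[OF T']
        psi(2) GmorD(2)[OF psi(1) assms(3)]] by blast
  then show ?thesis
    using that T Gmor_range by blast
qed

lemma Gmor_quadratic:
  assumes L: "0 < L" and M: "0 < M" and s: "0 \<le> s" "s < 1"
  shows "restrict (\<lambda>t. M * (t / L + s * ((t / L)^2 - t / L))) {0..L} \<in> Gmor L M"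
proof (rule GmorI)
  have "continuous_on {0..L} (\<lambda>t. M * (t / L + s * ((t / L)^2 - t / L)))"
    using L by (intro continuous_intros) auto
  then show "continuous_on {0..L} (restrict (\<lambda>t. M * (t / L + s * ((t / L)^2 - t / L))) {0..L})"
    by (rule continuous_on_eq) simp
  show "strict_mono_on {0..L} (restrict (\<lambda>t. M * (t / L + s * ((t / L)^2 - t / L))) {0..L})"
  proof (rule strict_mono_onI)
    fix r t assume "r \<in> {0..L}" "t \<in> {0..L}" "r < t"
    define x y where "x = r / L" and "y = t / L"
    have "0 \<le> x" "x < y"
      using \<open>r \<in> {0..L}\<close> \<open>r < t\<close> L by (auto simp: x_def y_def divide_strict_right_mono)
    have "(y + s * (y^2 - y)) - (x + s * (x^2 - x)) = (y - x) * (1 - s + s * (x + y))"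
      by (simp add: algebra_simps power2_eq_square)
    also have "\<dots> > 0"
    proof -
      have "0 \<le> s * (x + y)"
        using \<open>0 \<le> x\<close> \<open>x < y\<close> s by simp
      then show ?thesis
        using \<open>x < y\<close> s by simp
    qed
    finally have "x + s * (x^2 - x) < y + s * (y^2 - y)"
      by simp
    then show "restrict (\<lambda>t. M * (t / L + s * ((t / L)^2 - t / L))) {0..L} r
      < restrict (\<lambda>t. M * (t / L + s * ((t / L)^2 - t / L))) {0..L} t"
      using \<open>r \<in> {0..L}\<close> \<open>t \<in> {0..L}\<close> M by (simp add: x_def y_def)
  qed
qed (use L in auto)

lemma not_openin_Gtop_level_set:
  assumes L: "0 < L" and M: "0 < M" and u: "0 < u" "u < 1"
  shows "\<not> openin (Gtop L M) {psi \<in> Gmor L M. psi (L * u) = M * u}"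
proof
  define g where "g s = restrict (\<lambda>t. M * (t / L + s * ((t / L)^2 - t / L))) {0..L}" for s
  have "L * u \<in> {0..L}"
    using L u by auto
  then have g_apply: "g s (L * u) = M * (u + s * (u^2 - u))" for s
    using L by (simp add: g_def)
  assume level_open: "openin (Gtop L M) {psi \<in> Gmor L M. psi (L * u) = M * u}"
  have g0: "g 0 \<in> {psi \<in> Gmor L M. psi (L * u) = M * u}"
    using Gmor_quadratic[OF L M, of 0] g_apply[of 0] unfolding g_def by simp
  obtain e where "e > 0"
    and e: "\<And>f. f \<in> Gmor L M \<Longrightarrow> \<forall>t\<in>{0..L}. \<bar>f t - g 0 t\<bar> < e
      \<Longrightarrow> f \<in> {psi \<in> Gmor L M. psi (L * u) = M * u}"
    by (rule openin_Gtop_uniform_nbhd[OF level_open g0 less_imp_le[OF L]]) (rule that)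
  define s where "s = min (1/2) (e / (2 * M))"
  have "s \<le> e / (2 * M)"
    by (simp add: s_def)
  then have "s * M \<le> e / 2"
    using M by (simp add: field_simps)
  then have s: "0 < s" "s < 1" "s * M < e"
    using \<open>e > 0\<close> M by (auto simp: s_def)
  have "\<bar>g s t - g 0 t\<bar> < e" if "t \<in> {0..L}" for t
  proof -
    define x where "x = t / L"
    have "0 \<le> x" "x \<le> 1"
      using that L by (auto simp: x_def)
    then have "x^2 \<le> x"
      by (simp add: power2_eq_square mult_left_le)
    then have "\<bar>x^2 - x\<bar> \<le> 1"
      using \<open>x \<le> 1\<close> zero_le_power2[of x] unfolding abs_le_iff by linarith
    moreover have "g s t - g 0 t = (s * M) * (x^2 - x)"
      using that by (simp add: g_def x_def algebra_simps)
    ultimately have "\<bar>g s t - g 0 t\<bar> \<le> s * M"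
      using s M by (simp add: abs_mult mult_left_le)
    then show ?thesis
      using s by simp
  qed
  moreover have "g s \<in> Gmor L M"
    using Gmor_quadratic[OF L M] s unfolding g_def by simp
  ultimately have "g s \<in> {psi \<in> Gmor L M. psi (L * u) = M * u}"
    by (intro e) auto
  then have "M * (u + s * (u^2 - u)) = M * u"
    using g_apply[of s] by simp
  then have "s * (u^2 - u) = 0"
    using M by (simp add: algebra_simps)
  moreover have "s * (u^2 - u) < 0"
    using s u by (simp add: mult_pos_neg power2_eq_square)
  ultimately show False
    by linarith
qed

lemma continuous_map_Gtensor_sum_topology:
  assumes "\<And>a b. (a, b) \<in> I \<Longrightarrow> 0 \<le> a \<and> 0 \<le> b \<and> a + b = L"
  shows "continuous_map (sum_topology (\<lambda>(a, b). prod_topology (Gtop a l1) (Gtop b l2)) I)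
    (Gtop L (l1 + l2)) (\<lambda>((a, b), (p, q)). Gtensor a l1 b p q)"
proof (rule continuous_map_from_sum_topology)
  fix i assume "i \<in> I"
  then obtain a b where "i = (a, b)" "0 \<le> a" "0 \<le> b" "L = a + b"
    using assms by (cases i) force
  then show "continuous_map ((\<lambda>(a, b). prod_topology (Gtop a l1) (Gtop b l2)) i)
    (Gtop L (l1 + l2)) (\<lambda>x. (\<lambda>((a, b), (p, q)). Gtensor a l1 b p q) (i, x))"
    using continuous_map_Gtensor[of a b l1 l2] by simp
qed

lemma inj_on_Gtensor_Sigma:
  assumes "\<And>a b. (a, b) \<in> I \<Longrightarrow> 0 \<le> a \<and> 0 \<le> b \<and> a + b = L"
  shows "inj_on (\<lambda>((a, b), (p, q)). Gtensor a l1 b p q) (SIGMA (a, b):I. Gmor a l1 \<times> Gmor b l2)"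
proof (rule inj_onI)
  fix z z' assume z: "z \<in> (SIGMA (a, b):I. Gmor a l1 \<times> Gmor b l2)"
    and z': "z' \<in> (SIGMA (a, b):I. Gmor a l1 \<times> Gmor b l2)"
    and eq: "(\<lambda>((a, b), (p, q)). Gtensor a l1 b p q) z = (\<lambda>((a, b), (p, q)). Gtensor a l1 b p q) z'"
  obtain a b p q a' b' p' q' where zz: "z = ((a, b), (p, q))" "z' = ((a', b'), (p', q'))"
    by (cases z, cases z') auto
  then have I: "(a, b) \<in> I" "(a', b') \<in> I"
    and Gmor: "p \<in> Gmor a l1" "q \<in> Gmor b l2" "p' \<in> Gmor a' l1" "q' \<in> Gmor b' l2"
    using z z' by auto
  have "0 \<le> a" "0 \<le> b" "0 \<le> a'" "0 \<le> b'" "a + b = a' + b'"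
    using assms[OF I(1)] assms[OF I(2)] by auto
  moreover have "Gtensor a l1 b p q = Gtensor a' l1 b' p' q'"
    using eq zz by simp
  ultimately have "a = a' \<and> p = p' \<and> q = q'"
    using Gtensor_inject[OF Gmor] by blast
  then show "z = z'"
    using zz \<open>a + b = a' + b'\<close> by simp
qed

lemma image_Gtensor_summand:
  assumes "0 \<le> a" "a \<le> L"
  shows "(\<lambda>((a, b), (p, q)). Gtensor a l1 b p q) ` (Pair (a, L - a) ` (Gmor a l1 \<times> Gmor (L - a) l2))
    = {psi \<in> Gmor L (l1 + l2). psi a = l1}"
  using image_Gtensor[of a "L - a" l1 l2] assms by (simp add: image_image case_prod_beta')

lemma image_Gtensor_Sigma:
  assumes "0 < L" "0 < l1" "0 < l2"
  shows "(\<lambda>((a, b), (p, q)). Gtensor a l1 b p q)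
      ` (SIGMA (a, b):{(a, b). 0 < a \<and> 0 < b \<and> a + b = L}. Gmor a l1 \<times> Gmor b l2)
    = Gmor L (l1 + l2)"
    (is "?F ` ?X = _")
proof
  show "?F ` ?X \<subseteq> Gmor L (l1 + l2)"
  proof
    fix psi assume "psi \<in> ?F ` ?X"
    then obtain a b p q where "0 < a" "0 < b" "a + b = L" "p \<in> Gmor a l1" "q \<in> Gmor b l2"
      and "psi = Gtensor a l1 b p q"
      by auto
    then show "psi \<in> Gmor L (l1 + l2)"
      using Gtensor_in_Gmor[of p a l1 q b l2] by simp
  qed
  show "Gmor L (l1 + l2) \<subseteq> ?F ` ?X"
  proof
    fix psi assume psi: "psi \<in> Gmor L (l1 + l2)"
    obtain a where "0 \<le> a" "a \<le> L" "psi a = l1"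
      using IVT'[of psi 0 l1 L] GmorD[OF psi] assms by auto
    moreover have "a \<noteq> 0" "a \<noteq> L"
      using GmorD[OF psi] \<open>psi a = l1\<close> assms by auto
    ultimately have "Pair (a, L - a) ` (Gmor a l1 \<times> Gmor (L - a) l2) \<subseteq> ?X"
      by auto
    moreover have "psi \<in> ?F ` (Pair (a, L - a) ` (Gmor a l1 \<times> Gmor (L - a) l2))"
      using psi \<open>psi a = l1\<close> image_Gtensor_summand[of a L l1 l2] \<open>0 \<le> a\<close> \<open>a \<le> L\<close> by simp
    ultimately show "psi \<in> ?F ` ?X"
      by blast
  qed
qed

lemma not_open_map_Gtensor_sum_topology:
  assumes "0 < L" "0 < l1" "0 < l2"
  shows "\<not> open_map
    (sum_topology (\<lambda>(a, b). prod_topology (Gtop a l1) (Gtop b l2)) {(a, b). 0 < a \<and> 0 < b \<and> a + b = L})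
    (Gtop L (l1 + l2)) (\<lambda>((a, b), (p, q)). Gtensor a l1 b p q)"
    (is "\<not> open_map ?X _ ?F")
proof
  assume "open_map ?X (Gtop L (l1 + l2)) ?F"
  \<comment> \<open>\<open>L * u\<close> is where the linear morphism in \<open>G(L, l1 + l2)\<close> takes the value \<open>l1\<close>\<close>
  define u where "u = l1 / (l1 + l2)"
  have u: "0 < u" "u < 1" "(l1 + l2) * u = l1"
    using assms by (auto simp: u_def field_simps)
  let ?S = "Pair (L * u, L - L * u) ` (Gmor (L * u) l1 \<times> Gmor (L - L * u) l2)"
  have a: "0 < L * u" "L * u < L"
    using u assms mult_strict_left_mono[OF \<open>u < 1\<close> \<open>0 < L\<close>] by auto
  then have i: "(L * u, L - L * u) \<in> {(a, b). 0 < a \<and> 0 < b \<and> a + b = L}"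
    by simp
  have "open_map (prod_topology (Gtop (L * u) l1) (Gtop (L - L * u) l2)) ?X (Pair (L * u, L - L * u))"
    using open_map_component_injection[OF i, of "\<lambda>(a, b). prod_topology (Gtop a l1) (Gtop b l2)"]
    by (simp only: prod.case)
  moreover have "openin (prod_topology (Gtop (L * u) l1) (Gtop (L - L * u) l2))
    (Gmor (L * u) l1 \<times> Gmor (L - L * u) l2)"
    by (metis openin_topspace topspace_prod_topology topspace_Gtop)
  ultimately have "openin ?X ?S"
    unfolding open_map_def by blast
  then have "openin (Gtop L (l1 + l2)) (?F ` ?S)"
    using \<open>open_map ?X (Gtop L (l1 + l2)) ?F\<close> unfolding open_map_def by blast
  moreover have "?F ` ?S = {psi \<in> Gmor L (l1 + l2). psi (L * u) = l1}"
    using image_Gtensor_summand[OF less_imp_le[OF a(1)] less_imp_le[OF a(2)]] .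
  moreover have "\<not> openin (Gtop L (l1 + l2)) {psi \<in> Gmor L (l1 + l2). psi (L * u) = l1}"
    using not_openin_Gtop_level_set[of L "l1 + l2" u] u assms by simp
  ultimately show False
    by simp
qed

theorem proposition4p6:
  fixes L l1 l2 :: real
  assumes "L > 0" and "l1 > 0" and "l2 > 0"
  defines "X \<equiv> sum_topology (\<lambda>(a, b). prod_topology (Gtop a l1) (Gtop b l2))
            {(a, b). a > 0 \<and> b > 0 \<and> a + b = L}"
    and "F \<equiv> (\<lambda>((a, b), (phi1, phi2)). Gtensor a l1 b phi1 phi2)"
  shows "continuous_map X (Gtop L (l1 + l2)) F
    \<and> bij_betw F (topspace X) (topspace (Gtop L (l1 + l2)))
    \<and> \<not> homeomorphic_map X (Gtop L (l1 + l2)) F"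
proof -
  let ?I = "{(a, b). a > 0 \<and> b > 0 \<and> a + b = L}"
  have I: "0 \<le> a \<and> 0 \<le> b \<and> a + b = L" if "(a, b) \<in> ?I" for a b
    using that by auto
  have topX: "topspace X = (SIGMA (a, b):?I. Gmor a l1 \<times> Gmor b l2)"
    by (auto simp: X_def)
  have "inj_on F (topspace X)"
    unfolding topX F_def using I by (rule inj_on_Gtensor_Sigma)
  moreover have "F ` topspace X = topspace (Gtop L (l1 + l2))"
    unfolding topX F_def using image_Gtensor_Sigma assms by simp
  ultimately have "bij_betw F (topspace X) (topspace (Gtop L (l1 + l2)))"
    by (simp add: bij_betw_def)
  moreover have "continuous_map X (Gtop L (l1 + l2)) F"
    unfolding X_def F_def using I by (rule continuous_map_Gtensor_sum_topology)
  moreover have "\<not> open_map X (Gtop L (l1 + l2)) F"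
    unfolding X_def F_def using not_open_map_Gtensor_sum_topology assms by simp
  ultimately show ?thesis
    using homeomorphic_imp_open_map by blast
qed

end
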